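(* Consider a gate set consisting of almost classical gates that includes CNOT and a diagonal gate $D$. Let $U=U_IU_{I-1}\cdots U_1$ with each $U_i$ from the gate set. Then, after appending ancilla qubits initialized to $|0\rangle$, $U$ can be compiled into an equivalent circuit of almost classical gates (acting as $U$ on the data qubits and returning the ancillas to $|0\rangle$) in which all gates of the form $D^k$, with $k$ an integer, lie in a single layer (i.e., act in parallel on distinct qubits).
   Context: A unitary $V$ on $n$ qubits is almost classical if $V=\sum_x e^{i\phi(x)}|f(x)\rangle\langle x|$ for some bijection $f:\{0,1\}^n\to\{0,1\}^n$ and phases $e^{i\phi(x)}\in U(1)$; i.e. it maps each computational basis state to a computational basis state times a phase (e.g. CNOT, permutation gates, diagonal phase gates). *)

theory Defs
  imports Complex_Main
begin

text \<open>Computational basis states of k qubits: bit strings of length k.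
  A k-qubit operator is given by its matrix entries  M y x = <y|M|x>,
  only the entries with x, y in bits k are meaningful.\<close>

type_synonym qmat = "bool list \<Rightarrow> bool list \<Rightarrow> complex"

definition bits :: "nat \<Rightarrow> bool list set" where
  "bits k = {xs. length xs = k}"

definition mat_eq :: "nat \<Rightarrow> qmat \<Rightarrow> qmat \<Rightarrow> bool" where
  "mat_eq k A B \<longleftrightarrow> (\<forall>x\<in>bits k. \<forall>y\<in>bits k. A y x = B y x)"

definition id_mat :: qmat where
  "id_mat y x = (if y = x then 1 else 0)"

definition mmult :: "nat \<Rightarrow> qmat \<Rightarrow> qmat \<Rightarrow> qmat" where
  "mmult k A B y x = (\<Sum>z\<in>bits k. A y z * B z x)"

definition adj :: "qmat \<Rightarrow> qmat" where
  "adj M y x = cnj (M x y)"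

fun mpow :: "nat \<Rightarrow> qmat \<Rightarrow> nat \<Rightarrow> qmat" where
  "mpow k M 0 = id_mat"
| "mpow k M (Suc j) = mmult k M (mpow k M j)"

text \<open>Integer powers of a unitary (negative powers via the inverse = adjoint).\<close>
definition mpowi :: "nat \<Rightarrow> qmat \<Rightarrow> int \<Rightarrow> qmat" where
  "mpowi k M i = (if 0 \<le> i then mpow k M (nat i) else mpow k (adj M) (nat (- i)))"

definition almost_classical :: "nat \<Rightarrow> qmat \<Rightarrow> bool" where
  "almost_classical k M \<longleftrightarrow>
     (\<exists>f \<phi>. bij_betw f (bits k) (bits k) \<and>
        (\<forall>x\<in>bits k. \<forall>y\<in>bits k. M y x = (if y = f x then cis (\<phi> x) else 0)))"

definition diagonal :: "nat \<Rightarrow> qmat \<Rightarrow> bool" where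
  "diagonal k M \<longleftrightarrow> (\<forall>x\<in>bits k. \<forall>y\<in>bits k. x \<noteq> y \<longrightarrow> M y x = 0)"

definition cnot :: qmat where
  "cnot y x = (if y = [x ! 0, x ! 0 \<noteq> x ! 1] then 1 else 0)"

text \<open>A gate application: (arity k, matrix M, list qs of the k qubits it acts on).\<close>
type_synonym gate_app = "nat \<times> qmat \<times> nat list"

definition wf_app :: "nat \<Rightarrow> gate_app \<Rightarrow> bool" where
  "wf_app N g = (case g of (k, M, qs) \<Rightarrow> length qs = k \<and> distinct qs \<and> set qs \<subseteq> {..<N})"

text \<open>Embedding of a gate acting on qubits qs into the N-qubit space (tensor with identity).\<close>
definition embed :: "nat \<Rightarrow> gate_app \<Rightarrow> qmat" where
  "embed N g = (case g of (k, M, qs) \<Rightarrow> (\<lambda>y x.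
     if length x = N \<and> length y = N \<and> (\<forall>i<N. i \<notin> set qs \<longrightarrow> y ! i = x ! i)
     then M (map ((!) y) qs) (map ((!) x) qs) else 0))"

text \<open>A circuit [g_1, ..., g_I] denotes U_I ... U_1 (g_1 applied first).\<close>
definition circ_mat :: "nat \<Rightarrow> gate_app list \<Rightarrow> qmat" where
  "circ_mat N gs = foldl (\<lambda>acc g. mmult N (embed N g) acc) id_mat gs"

definition qubits :: "gate_app \<Rightarrow> nat set" where
  "qubits g = set (snd (snd g))"

definition is_D_power :: "nat \<Rightarrow> qmat \<Rightarrow> gate_app \<Rightarrow> bool" where
  "is_D_power d D g = (case g of (k, M, qs) \<Rightarrow> k = d \<and> (\<exists>i::int. mat_eq d M (mpowi d D i)))"

definition D_single_layer :: "nat \<Rightarrow> qmat \<Rightarrow> gate_app list \<Rightarrow> bool" where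
  "D_single_layer d D C \<longleftrightarrow>
     (\<exists>C1 L C2. C = C1 @ L @ C2 \<and>
        (\<forall>g\<in>set C1 \<union> set C2. \<not> is_D_power d D g) \<and>
        (\<forall>i<length L. \<forall>j<length L. i \<noteq> j \<longrightarrow> qubits (L ! i) \<inter> qubits (L ! j) = {}))"

end

theory Submission
  imports Defs
begin

text \<open>An almost classical circuit maps each basis state to a basis state times a phase, so it can
  be simulated by following a single basis state and multiplying up the phases. The compiled
  circuit has four parts. First run U on the data register, but replace each diagonal gate U_j with
  a CNOT fan-out that copies the current data state into a fresh ancilla block j. This changes
  nothing on the data register, because diagonal gates fix basis states. Next, apply every
  diagonal gate U_j to its own block in a single layer. Each one contributes exactly the phase
  that U_j would have contributed in U. Then undo the first part with its adjoint. This clears the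
  ancillas and cancels the first part's phases. Finally, apply the non-diagonal gates of U to the
  data register again.\<close>

fun scatter :: "nat list \<Rightarrow> bool list \<Rightarrow> bool list \<Rightarrow> bool list" where
  "scatter [] v s = s"
| "scatter (q # qs) v s = (scatter qs (tl v) s)[q := hd v]"

lemma length_scatter [simp]: "length (scatter qs v s) = length s"
  by (induction qs arbitrary: v) auto

lemma nth_scatter_notin: "p \<notin> set qs \<Longrightarrow> scatter qs v s ! p = s ! p"
  by (induction qs arbitrary: v) auto

lemma map_nth_scatter:
  assumes "distinct qs" "set qs \<subseteq> {..<length s}" "length v = length qs"
  shows "map ((!) (scatter qs v s)) qs = v"
  using assms
proof (induction qs arbitrary: v)
  case (Cons q qs)
  then obtain b v' where v: "v = b # v'" by (cases v) auto
  have "map ((!) ((scatter qs v' s)[q := b])) qs = map ((!) (scatter qs v' s)) qs"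
    using Cons.prems(1) by (intro map_cong[OF refl]) (metis distinct.simps(2) nth_list_update_neq)
  with Cons v show ?case by simp
qed simp

lemma scatter_unique:
  assumes "distinct qs" "set qs \<subseteq> {..<length s}" "length y = length s"
    and "\<forall>i<length s. i \<notin> set qs \<longrightarrow> y ! i = s ! i" "map ((!) y) qs = v"
  shows "y = scatter qs v s"
proof (rule nth_equalityI)
  fix p assume p: "p < length y"
  show "y ! p = scatter qs v s ! p"
  proof (cases "p \<in> set qs")
    case True
    then obtain i where "i < length qs" "p = qs ! i" by (metis in_set_conv_nth)
    moreover have "map ((!) (scatter qs v s)) qs = v"
      using assms by (intro map_nth_scatter) auto
    ultimately show ?thesis using assms(5) by (metis nth_map)
  qed (use assms p nth_scatter_notin in auto)
qed (use assms in simp)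

lemma scatter_self: "distinct qs \<Longrightarrow> set qs \<subseteq> {..<length s} \<Longrightarrow> scatter qs (map ((!) s) qs) s = s"
  by (rule scatter_unique[symmetric]) auto

lemma scatter_append: "set qs \<subseteq> {..<length x} \<Longrightarrow> scatter qs v (x @ a) = scatter qs v x @ a"
  by (induction qs arbitrary: v) (auto simp: list_update_append)

lemma finite_bits [simp]: "finite (bits k)"
  using finite_lists_length_eq[of "UNIV :: bool set" k] by (simp add: bits_def)

section \<open>Almost classical matrices\<close>

text \<open>Meaningful only when column v of M has exactly one nonzero entry, as for almost classical M.\<close>

definition basis_image :: "nat \<Rightarrow> qmat \<Rightarrow> bool list \<Rightarrow> bool list" where
  "basis_image k M v = (SOME w. w \<in> bits k \<and> M w v \<noteq> 0)"

lemma basis_image_eq: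
  assumes "\<forall>x\<in>bits k. \<forall>y\<in>bits k. M y x = (if y = f x then cis (\<phi> x) else 0)"
    and "f v \<in> bits k" "v \<in> bits k"
  shows "basis_image k M v = f v"
  unfolding basis_image_def by (rule some_equality) (use assms in \<open>auto split: if_splits\<close>)

lemma almost_classical_column:
  assumes "almost_classical k M" "v \<in> bits k"
  shows "basis_image k M v \<in> bits k" "norm (M (basis_image k M v) v) = 1"
    and "y \<in> bits k \<Longrightarrow> y \<noteq> basis_image k M v \<Longrightarrow> M y v = 0"
proof -
  obtain f \<phi> where f: "bij_betw f (bits k) (bits k)"
    and M: "\<forall>x\<in>bits k. \<forall>y\<in>bits k. M y x = (if y = f x then cis (\<phi> x) else 0)"
    using assms(1) unfolding almost_classical_def by blast
  have fv: "f v \<in> bits k" using f assms(2) by (rule bij_betw_apply)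
  have "basis_image k M v = f v" using M fv assms(2) by (rule basis_image_eq)
  then show "basis_image k M v \<in> bits k" "norm (M (basis_image k M v) v) = 1"
    and "y \<in> bits k \<Longrightarrow> y \<noteq> basis_image k M v \<Longrightarrow> M y v = 0"
    using M fv assms(2) by auto
qed

lemma adj_adj [simp]: "adj (adj M) = M"
  by (simp add: adj_def fun_eq_iff)

lemma adj_classical_form:
  assumes f: "bij_betw f (bits k) (bits k)"
    and M: "\<forall>x\<in>bits k. \<forall>y\<in>bits k. M y x = (if y = f x then cis (\<phi> x) else 0)"
  defines "g \<equiv> inv_into (bits k) f"
  shows "\<forall>x\<in>bits k. \<forall>y\<in>bits k. adj M y x = (if y = g x then cis (- \<phi> (g x)) else 0)"
proof (intro ballI)
  fix x y assume x: "x \<in> bits k" and y: "y \<in> bits k"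
  have "x = f y \<longleftrightarrow> y = g x"
    using f x y unfolding g_def by (metis bij_betw_inv_into_left bij_betw_inv_into_right)
  then show "adj M y x = (if y = g x then cis (- \<phi> (g x)) else 0)"
    using M x y by (auto simp: adj_def cis_cnj)
qed

lemma almost_classical_adj:
  assumes "almost_classical k M"
  shows "almost_classical k (adj M)"
proof -
  obtain f \<phi> where f: "bij_betw f (bits k) (bits k)"
    and M: "\<forall>x\<in>bits k. \<forall>y\<in>bits k. M y x = (if y = f x then cis (\<phi> x) else 0)"
    using assms unfolding almost_classical_def by blast
  show ?thesis
    unfolding almost_classical_def
    using bij_betw_inv_into[OF f] adj_classical_form[OF f M]
    by (intro exI[of _ "inv_into (bits k) f"] exI[of _ "\<lambda>x. - \<phi> (inv_into (bits k) f x)"]) blast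
qed

lemma basis_image_adj:
  assumes "almost_classical k M" "v \<in> bits k"
  shows "basis_image k (adj M) (basis_image k M v) = v"
proof -
  obtain f \<phi> where f: "bij_betw f (bits k) (bits k)"
    and M: "\<forall>x\<in>bits k. \<forall>y\<in>bits k. M y x = (if y = f x then cis (\<phi> x) else 0)"
    using assms(1) unfolding almost_classical_def by blast
  have fv: "f v \<in> bits k" using f assms(2) by (rule bij_betw_apply)
  have "basis_image k M v = f v" using M fv assms(2) by (rule basis_image_eq)
  moreover have "basis_image k (adj M) (f v) = inv_into (bits k) f (f v)"
    by (rule basis_image_eq[OF adj_classical_form[OF f M]])
      (use f fv in \<open>auto intro: bij_betw_apply bij_betw_inv_into\<close>)
  ultimately show ?thesis using f assms(2) by (simp add: bij_betw_inv_into_left)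
qed

section \<open>Classical simulation of circuits\<close>

fun gate_state :: "gate_app \<Rightarrow> bool list \<Rightarrow> bool list" where
  "gate_state (k, M, qs) s = scatter qs (basis_image k M (map ((!) s) qs)) s"

fun gate_phase :: "gate_app \<Rightarrow> bool list \<Rightarrow> complex" where
  "gate_phase (k, M, qs) s = M (basis_image k M (map ((!) s) qs)) (map ((!) s) qs)"

lemma length_gate_state [simp]: "length (gate_state g s) = length s"
  by (cases g) auto

fun run_circ :: "gate_app list \<Rightarrow> bool list \<Rightarrow> bool list \<times> complex" where
  "run_circ [] s = (s, 1)"
| "run_circ (g # gs) s =
     (fst (run_circ gs (gate_state g s)), snd (run_circ gs (gate_state g s)) * gate_phase g s)"

lemma run_circ_append:
  "run_circ (as @ bs) s =
     (fst (run_circ bs (fst (run_circ as s))), snd (run_circ bs (fst (run_circ as s))) * snd (run_circ as s))"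
  by (induction as arbitrary: s) auto

lemma length_run_circ [simp]: "length (fst (run_circ gs s)) = length s"
  by (induction gs arbitrary: s) auto

definition classical_gate :: "nat \<Rightarrow> gate_app \<Rightarrow> bool" where
  "classical_gate N g \<longleftrightarrow> wf_app N g \<and> almost_classical (fst g) (fst (snd g))"

lemma classical_gate_mono: "classical_gate n g \<Longrightarrow> n \<le> N \<Longrightarrow> classical_gate N g"
  by (auto simp: classical_gate_def wf_app_def)

definition acts_classically :: "nat \<Rightarrow> qmat \<Rightarrow> (bool list \<Rightarrow> bool list) \<Rightarrow> (bool list \<Rightarrow> complex) \<Rightarrow> bool" where
  "acts_classically N A F p \<longleftrightarrow>
     (\<forall>x\<in>bits N. F x \<in> bits N \<and> (\<forall>z\<in>bits N. A z x = (if z = F x then p x else 0)))"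

lemma acts_classically_mmult:
  assumes A: "acts_classically N A F p" and B: "acts_classically N B G q"
  shows "acts_classically N (mmult N A B) (F \<circ> G) (\<lambda>x. p (G x) * q x)"
  unfolding acts_classically_def
proof (intro ballI conjI)
  fix x assume x: "x \<in> bits N"
  then have Gx: "G x \<in> bits N" using B unfolding acts_classically_def by blast
  then show "(F \<circ> G) x \<in> bits N" using A unfolding acts_classically_def by auto
  fix z assume z: "z \<in> bits N"
  have "mmult N A B z x = (\<Sum>w\<in>bits N. if w = G x then A z w * q x else 0)"
    unfolding mmult_def using B x by (intro sum.cong) (auto simp: acts_classically_def)
  also have "\<dots> = A z (G x) * q x" using Gx by simp
  also have "\<dots> = (if z = (F \<circ> G) x then p (G x) * q x else 0)"
    using A Gx z unfolding acts_classically_def by auto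
  finally show "mmult N A B z x = (if z = (F \<circ> G) x then p (G x) * q x else 0)" .
qed

lemma acts_classically_embed:
  assumes "classical_gate N g"
  shows "acts_classically N (embed N g) (gate_state g) (gate_phase g)"
proof -
  obtain k M qs where g: "g = (k, M, qs)" by (cases g)
  have qs: "length qs = k" "distinct qs" "set qs \<subseteq> {..<N}" and M: "almost_classical k M"
    using assms by (auto simp: classical_gate_def wf_app_def g)
  show ?thesis
    unfolding acts_classically_def
  proof (intro ballI conjI)
    fix x assume x: "x \<in> bits N"
    define v where "v = map ((!) x) qs"
    define w where "w = basis_image k M v"
    have v: "v \<in> bits k" using qs by (simp add: bits_def v_def)
    have w: "w \<in> bits k" unfolding w_def using M v by (rule almost_classical_column)
    show "gate_state g x \<in> bits N" using x by (simp add: g bits_def)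
    fix z assume z: "z \<in> bits N"
    have "(\<forall>i<N. i \<notin> set qs \<longrightarrow> z ! i = x ! i) \<and> map ((!) z) qs = w \<longleftrightarrow> z = scatter qs w x"
      using x z w qs scatter_unique[of qs x z w] map_nth_scatter[of qs x w] nth_scatter_notin[of _ qs w x]
      by (auto simp: bits_def)
    moreover have "M (map ((!) z) qs) v = (if map ((!) z) qs = w then M w v else 0)"
      using almost_classical_column(3)[OF M v] qs unfolding w_def by (auto simp: bits_def)
    ultimately show "embed N g z x = (if z = gate_state g x then gate_phase g x else 0)"
      using x z by (auto simp: embed_def g bits_def v_def w_def)
  qed
qed

lemma acts_classically_foldl:
  assumes "\<forall>g\<in>set gs. classical_gate N g" "acts_classically N A F p"
  shows "acts_classically N (foldl (\<lambda>acc g. mmult N (embed N g) acc) A gs)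
           (\<lambda>x. fst (run_circ gs (F x))) (\<lambda>x. snd (run_circ gs (F x)) * p x)"
  using assms
proof (induction gs arbitrary: A F p)
  case (Cons g gs)
  have "acts_classically N (mmult N (embed N g) A) (gate_state g \<circ> F) (\<lambda>x. gate_phase g (F x) * p x)"
    using Cons.prems by (intro acts_classically_mmult acts_classically_embed) auto
  with Cons.IH Cons.prems(1) show ?case by (simp add: comp_def mult.assoc)
qed simp

lemma circ_mat_run_circ:
  assumes "\<forall>g\<in>set gs. classical_gate N g" "x \<in> bits N" "z \<in> bits N"
  shows "circ_mat N gs z x = (if z = fst (run_circ gs x) then snd (run_circ gs x) else 0)"
proof -
  have "acts_classically N id_mat id (\<lambda>_. 1)" by (simp add: acts_classically_def id_mat_def)
  from acts_classically_foldl[OF assms(1) this] assms(2,3) show ?thesis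
    unfolding acts_classically_def circ_mat_def by auto
qed

section \<open>Inverse circuits\<close>

fun adj_gate :: "gate_app \<Rightarrow> gate_app" where
  "adj_gate (k, M, qs) = (k, adj M, qs)"

lemma adj_gate_adj_gate [simp]: "adj_gate (adj_gate g) = g"
  by (cases g) simp

lemma classical_gate_adj: "classical_gate N g \<Longrightarrow> classical_gate N (adj_gate g)"
  by (cases g) (auto simp: classical_gate_def wf_app_def almost_classical_adj)

lemma gate_adj_inverse:
  assumes "classical_gate N g" "s \<in> bits N"
  shows "gate_state (adj_gate g) (gate_state g s) = s"
    and "gate_phase (adj_gate g) (gate_state g s) * gate_phase g s = 1"
proof -
  obtain k M qs where g: "g = (k, M, qs)" by (cases g)
  have qs: "length qs = k" "distinct qs" "set qs \<subseteq> {..<length s}" and M: "almost_classical k M"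
    using assms by (auto simp: classical_gate_def wf_app_def bits_def g)
  define v where "v = map ((!) s) qs"
  define w where "w = basis_image k M v"
  have v: "v \<in> bits k" using qs by (simp add: bits_def v_def)
  have w: "w \<in> bits k" unfolding w_def using M v by (rule almost_classical_column)
  have read_back: "map ((!) (scatter qs w s)) qs = w"
    using qs w by (intro map_nth_scatter) (auto simp: bits_def)
  have adj_image: "basis_image k (adj M) w = v" unfolding w_def using M v by (rule basis_image_adj)
  have "s = scatter qs v (scatter qs w s)"
    using qs by (intro scatter_unique) (auto simp: nth_scatter_notin v_def)
  then show "gate_state (adj_gate g) (gate_state g s) = s"
    by (simp add: g read_back adj_image flip: v_def w_def)
  have "cnj (M w v) * M w v = 1"
    using almost_classical_column(2)[OF M v] complex_norm_square[of "M w v"]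
    by (simp add: w_def mult.commute)
  then show "gate_phase (adj_gate g) (gate_state g s) * gate_phase g s = 1"
    by (simp add: g read_back adj_image adj_def flip: v_def w_def)
qed

lemma run_circ_rev_adj:
  assumes "\<forall>g\<in>set gs. classical_gate N g" "s \<in> bits N"
  shows "fst (run_circ (rev (map adj_gate gs)) (fst (run_circ gs s))) = s \<and>
         snd (run_circ (rev (map adj_gate gs)) (fst (run_circ gs s))) * snd (run_circ gs s) = 1"
  using assms
proof (induction gs arbitrary: s)
  case (Cons g gs)
  have "gate_state g s \<in> bits N" using Cons.prems(2) by (simp add: bits_def)
  with Cons gate_adj_inverse[of N g s] show ?case
    by (simp add: run_circ_append algebra_simps)
qed simp

lemma diagonal_adj_iff: "diagonal k (adj A) \<longleftrightarrow> diagonal k A"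
  unfolding diagonal_def adj_def by (metis complex_cnj_zero_iff)

lemma diagonal_mpow: "diagonal k A \<Longrightarrow> diagonal k (mpow k A j)"
proof (induction j)
  case 0 then show ?case by (simp add: diagonal_def id_mat_def)
next
  case (Suc j)
  have "A y z * mpow k A j z x = 0" if "x \<in> bits k" "y \<in> bits k" "z \<in> bits k" "x \<noteq> y" for x y z
    using Suc that unfolding diagonal_def by (cases "z = y") auto
  then show ?case unfolding diagonal_def mpow.simps mmult_def by (auto intro!: sum.neutral)
qed

definition diagonal_gate :: "gate_app \<Rightarrow> bool" where
  "diagonal_gate g \<longleftrightarrow> diagonal (fst g) (fst (snd g))"

lemma diagonal_gate_adj [simp]: "diagonal_gate (adj_gate g) = diagonal_gate g"
  by (cases g) (simp add: diagonal_gate_def diagonal_adj_iff)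

lemma diagonal_if_D_power:
  assumes "diagonal d D" "is_D_power d D g"
  shows "diagonal_gate g"
proof -
  obtain k M qs i where g: "g = (k, M, qs)" "k = d" and M: "mat_eq d M (mpowi d D i)"
    using assms(2) unfolding is_D_power_def by (cases g) auto
  have "diagonal d (mpowi d D i)"
    using assms(1) by (simp add: mpowi_def diagonal_mpow diagonal_adj_iff)
  with M g show ?thesis by (simp add: diagonal_gate_def diagonal_def mat_eq_def)
qed

lemma basis_image_diagonal:
  assumes "almost_classical k M" "diagonal k M" "v \<in> bits k"
  shows "basis_image k M v = v"
  using almost_classical_column(1,2)[OF assms(1,3)] assms(2,3) unfolding diagonal_def by force

lemma gate_state_diagonal:
  assumes "classical_gate N g" "diagonal_gate g" "s \<in> bits N"
  shows "gate_state g s = s"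
proof -
  obtain k M qs where g: "g = (k, M, qs)" by (cases g)
  have qs: "length qs = k" "distinct qs" "set qs \<subseteq> {..<length s}"
    and M: "almost_classical k M" "diagonal k M"
    using assms by (auto simp: classical_gate_def wf_app_def diagonal_gate_def bits_def g)
  have "basis_image k M (map ((!) s) qs) = map ((!) s) qs"
    using M qs by (intro basis_image_diagonal) (auto simp: bits_def)
  with qs show ?thesis by (simp add: g scatter_self)
qed

lemma run_circ_diagonal:
  assumes "\<forall>g\<in>set gs. classical_gate N g \<and> diagonal_gate g" "s \<in> bits N"
  shows "run_circ gs s = (s, \<Prod>g\<leftarrow>gs. gate_phase g s)"
  using assms
proof (induction gs)
  case (Cons g gs)
  then have "gate_state g s = s" by (intro gate_state_diagonal) auto
  with Cons show ?case by (simp add: mult.commute)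
qed simp

section \<open>Registers and ancilla blocks\<close>

lemma gate_append:
  assumes "qubits g \<subseteq> {..<length x}"
  shows "gate_state g (x @ a) = gate_state g x @ a" "gate_phase g (x @ a) = gate_phase g x"
proof -
  obtain k M qs where g: "g = (k, M, qs)" by (cases g)
  have restrict: "map ((!) (x @ a)) qs = map ((!) x) qs"
    using assms by (auto simp: g qubits_def nth_append)
  with assms show "gate_state g (x @ a) = gate_state g x @ a" "gate_phase g (x @ a) = gate_phase g x"
    by (simp_all only: g gate_state.simps gate_phase.simps) (simp_all add: qubits_def scatter_append)
qed

lemma run_circ_append_register:
  assumes "\<forall>g\<in>set gs. qubits g \<subseteq> {..<length x}"
  shows "run_circ gs (x @ a) = (fst (run_circ gs x) @ a, snd (run_circ gs x))"
  using assms by (induction gs arbitrary: x) (auto simp: gate_append)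

fun shift_gate :: "nat \<Rightarrow> gate_app \<Rightarrow> gate_app" where
  "shift_gate off (k, M, qs) = (k, M, map ((+) off) qs)"

lemma qubits_shift: "qubits (shift_gate off g) = (+) off ` qubits g"
  by (cases g) (simp add: qubits_def)

lemma gate_phase_shift:
  assumes "off \<le> length s"
  shows "gate_phase (shift_gate off g) s = gate_phase g (drop off s)"
proof -
  obtain k M qs where g: "g = (k, M, qs)" by (cases g)
  have "map ((!) s) (map ((+) off) qs) = map ((!) (drop off s)) qs" using assms by simp
  then show ?thesis by (simp only: g shift_gate.simps gate_phase.simps)
qed

lemma classical_gate_shift:
  "classical_gate n g \<Longrightarrow> off + n \<le> N \<Longrightarrow> classical_gate N (shift_gate off g)"
  by (cases g) (fastforce simp: classical_gate_def wf_app_def distinct_map)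

lemma diagonal_gate_shift [simp]: "diagonal_gate (shift_gate off g) = diagonal_gate g"
  by (cases g) (simp add: diagonal_gate_def)

fun gate_kind :: "gate_app \<Rightarrow> nat \<times> qmat" where
  "gate_kind (k, M, qs) = (k, M)"

lemma gate_kind_shift [simp]: "gate_kind (shift_gate off g) = gate_kind g"
  by (cases g) simp

lemma cnot_not_diagonal:
  assumes "mat_eq 2 M cnot"
  shows "\<not> diagonal 2 M"
proof
  assume "diagonal 2 M"
  then have "M [True, False] [True, True] = 0" by (simp add: diagonal_def bits_def)
  moreover have "M [True, False] [True, True] = 1"
    using assms by (simp add: mat_eq_def bits_def cnot_def)
  ultimately show False by simp
qed

lemma cnot_gate:
  assumes M: "mat_eq 2 M cnot" and "i \<noteq> t" "i < length s" "t < length s"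
  shows "gate_state (2, M, [i, t]) s = s[t := (s ! i \<noteq> s ! t)]"
    and "gate_phase (2, M, [i, t]) s = 1"
proof -
  let ?v = "[s ! i, s ! t]" and ?w = "[s ! i, s ! i \<noteq> s ! t]"
  have M_col: "y \<in> bits 2 \<Longrightarrow> M y ?v = cnot y ?v" for y
    using M by (simp add: mat_eq_def bits_def)
  have "basis_image 2 M ?v = ?w"
    unfolding basis_image_def
    by (rule some_equality) (auto simp: M_col bits_def cnot_def split: if_splits)
  then show "gate_state (2, M, [i, t]) s = s[t := (s ! i \<noteq> s ! t)]"
      and "gate_phase (2, M, [i, t]) s = 1"
    using assms(2,3) M_col[of ?w] by (auto simp: list_update_swap bits_def cnot_def)
qed

definition fanout :: "qmat \<Rightarrow> nat \<Rightarrow> nat \<Rightarrow> gate_app list" where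
  "fanout M n off = map (\<lambda>i. (2, M, [i, off + i])) [0..<n]"

lemma classical_fanout:
  "almost_classical 2 M \<Longrightarrow> n \<le> off \<Longrightarrow> off + n \<le> N \<Longrightarrow> \<forall>g\<in>set (fanout M n off). classical_gate N g"
  by (auto simp: fanout_def classical_gate_def wf_app_def)

lemma run_fanout:
  assumes M: "mat_eq 2 M cnot" and x: "length x = n"
  shows "run_circ (fanout M n (n + length pre)) (x @ pre @ replicate n False @ post) =
           (x @ pre @ x @ post, 1)"
proof -
  have "run_circ (map (\<lambda>i. (2, M, [i, n + length pre + i])) [0..<k]) (x @ pre @ replicate n False @ post) =
          (x @ pre @ take k x @ replicate (n - k) False @ post, 1)" if "k \<le> n" for k
    using that
  proof (induction k)
    case (Suc k)
    have "n - k = Suc (n - Suc k)" using Suc.prems by simp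
    then show ?case
      using Suc x cnot_gate[OF M, of k "n + length pre + k" "x @ pre @ take k x @ replicate (n - k) False @ post"]
      by (simp add: run_circ_append nth_append list_update_append take_Suc_conv_app_nth)
  qed simp
  from this[of n] show ?thesis by (simp add: fanout_def x)
qed

lemma length_concat_blocks: "\<forall>b\<in>set bs. length b = n \<Longrightarrow> length (concat bs) = length bs * n"
  by (induction bs) auto

lemma concat_split_block:
  assumes "\<forall>b\<in>set bs. length b = n" "j < length bs"
  shows "concat bs = concat (take j bs) @ bs ! j @ concat (drop (Suc j) bs)"
    and "length (concat (take j bs)) = j * n"
proof -
  show "concat bs = concat (take j bs) @ bs ! j @ concat (drop (Suc j) bs)"
    using id_take_nth_drop[OF assms(2)] by (metis concat.simps(2) concat_append)
  show "length (concat (take j bs)) = j * n"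
    using assms length_concat_blocks[of "take j bs" n] by (auto dest: in_set_takeD)
qed

section \<open>The compiled circuit\<close>

locale diagonal_layering =
  fixes n :: nat and U :: "gate_app list" and Mc :: qmat
  assumes classical_U: "\<forall>g\<in>set U. classical_gate n g"
    and Mc_cnot: "mat_eq 2 Mc cnot" and Mc_classical: "almost_classical 2 Mc"
begin

abbreviation L :: nat where "L \<equiv> length U"

definition m :: nat where "m = n * L"

text \<open>Ancilla block j consists of the qubits n + j * n, ..., n + j * n + n - 1.\<close>

definition stage :: "nat \<Rightarrow> gate_app list" where
  "stage j = (if diagonal_gate (U ! j) then fanout Mc n (n + j * n) else [U ! j])"

definition compute :: "gate_app list" where
  "compute = concat (map stage [0..<L])"

definition layer :: "gate_app list" where
  "layer = map (\<lambda>j. shift_gate (n + j * n) (U ! j)) (filter (\<lambda>j. diagonal_gate (U ! j)) [0..<L])"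

definition rest :: "gate_app list" where
  "rest = filter (\<lambda>g. \<not> diagonal_gate g) U"

definition compiled :: "gate_app list" where
  "compiled = compute @ layer @ rev (map adj_gate compute) @ rest"

definition state_at :: "nat \<Rightarrow> bool list \<Rightarrow> bool list" where
  "state_at j x = fst (run_circ (take j U) x)"

definition phase_at :: "nat \<Rightarrow> bool list \<Rightarrow> complex" where
  "phase_at j x = gate_phase (U ! j) (state_at j x)"

definition ancilla_blocks :: "nat \<Rightarrow> bool list \<Rightarrow> bool list list" where
  "ancilla_blocks K x = map (\<lambda>j. if j < K \<and> diagonal_gate (U ! j) then state_at j x else replicate n False) [0..<L]"

lemma qubits_U: "g \<in> set U \<Longrightarrow> qubits g \<subseteq> {..<n}"
  using classical_U by (cases g) (fastforce simp: classical_gate_def wf_app_def qubits_def)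

lemma state_at_bits: "x \<in> bits n \<Longrightarrow> state_at j x \<in> bits n"
  by (simp add: state_at_def bits_def)

lemma state_at_Suc: "j < L \<Longrightarrow> state_at (Suc j) x = gate_state (U ! j) (state_at j x)"
  by (simp add: state_at_def take_Suc_conv_app_nth run_circ_append)

lemma state_at_Suc_diagonal:
  "j < L \<Longrightarrow> diagonal_gate (U ! j) \<Longrightarrow> x \<in> bits n \<Longrightarrow> state_at (Suc j) x = state_at j x"
  using classical_U by (simp add: state_at_Suc gate_state_diagonal[OF _ _ state_at_bits])

lemma run_circ_U: "snd (run_circ U x) = (\<Prod>j<L. phase_at j x)"
proof -
  have "snd (run_circ (take K U) x) = (\<Prod>j<K. phase_at j x)" if "K \<le> L" for K
    using that
    by (induction K) (simp_all add: take_Suc_conv_app_nth run_circ_append phase_at_def state_at_def mult.commute)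
  from this[of L] show ?thesis by simp
qed

lemma length_ancilla_blocks: "\<forall>b\<in>set (ancilla_blocks K x). length b = n" if "x \<in> bits n"
  using that state_at_bits by (auto simp: ancilla_blocks_def bits_def)

lemma concat_ancilla_blocks_0: "concat (ancilla_blocks 0 x) = replicate m False"
proof -
  have "concat (replicate k (replicate n False)) = replicate (n * k) False" for k
    by (induction k) (simp_all add: replicate_add)
  then show ?thesis by (simp add: ancilla_blocks_def m_def map_replicate_const)
qed

lemma run_stage:
  assumes x: "x \<in> bits n" and K: "K < L"
  shows "run_circ (stage K) (state_at K x @ concat (ancilla_blocks K x)) =
           (state_at (Suc K) x @ concat (ancilla_blocks (Suc K) x),
            if diagonal_gate (U ! K) then 1 else phase_at K x)"
proof (cases "diagonal_gate (U ! K)")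
  case True
  let ?s = "state_at K x" and ?c = "ancilla_blocks K x"
  have s: "length ?s = n" using state_at_bits[OF x] by (simp add: bits_def)
  have split: "concat ?c = concat (take K ?c) @ replicate n False @ concat (drop (Suc K) ?c)"
    and offset: "length (concat (take K ?c)) = K * n"
    using concat_split_block[OF length_ancilla_blocks[OF x], of K] K by (simp_all add: ancilla_blocks_def)
  have "ancilla_blocks (Suc K) x = ?c[K := ?s]"
    unfolding ancilla_blocks_def by (rule nth_equalityI) (use K in \<open>auto simp: nth_list_update True less_Suc_eq\<close>)
  then have "concat (ancilla_blocks (Suc K) x) = concat (take K ?c) @ ?s @ concat (drop (Suc K) ?c)"
    using K by (simp add: upd_conv_take_nth_drop ancilla_blocks_def)
  moreover have "stage K = fanout Mc n (n + length (concat (take K ?c)))"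
    using True offset by (simp add: stage_def)
  ultimately show ?thesis
    using True split run_fanout[OF Mc_cnot s] state_at_Suc_diagonal[OF K True x] by simp
next
  case False
  have "ancilla_blocks (Suc K) x = ancilla_blocks K x"
    using False by (auto simp: ancilla_blocks_def less_Suc_eq)
  moreover have "qubits (U ! K) \<subseteq> {..<length (state_at K x)}"
    using qubits_U[OF nth_mem[OF K]] state_at_bits[OF x] by (simp add: bits_def)
  ultimately show ?thesis
    using False by (simp add: stage_def gate_append state_at_Suc[OF K] phase_at_def)
qed

lemma run_compute:
  assumes x: "x \<in> bits n"
  shows "run_circ compute (x @ replicate m False) =
           (state_at L x @ concat (ancilla_blocks L x), \<Prod>j<L. if diagonal_gate (U ! j) then 1 else phase_at j x)"
proof -
  have "run_circ (concat (map stage [0..<K])) (x @ concat (ancilla_blocks 0 x)) =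
          (state_at K x @ concat (ancilla_blocks K x), \<Prod>j<K. if diagonal_gate (U ! j) then 1 else phase_at j x)"
    if "K \<le> L" for K
    using that
  proof (induction K)
    case (Suc K)
    then show ?case using run_stage[OF x, of K] by (simp add: run_circ_append mult.commute)
  qed (simp add: state_at_def)
  from this[of L] show ?thesis by (simp add: compute_def concat_ancilla_blocks_0)
qed

lemma block_bound: "j < L \<Longrightarrow> n + j * n + n \<le> n + m"
  using mult_le_mono1[of "Suc j" L n] by (simp add: m_def mult.commute[of n L])

lemma classical_gate_U: "g \<in> set U \<Longrightarrow> classical_gate (n + m) g"
  using classical_U by (auto intro: classical_gate_mono)

lemma classical_compute: "\<forall>g\<in>set compute. classical_gate (n + m) g"
proof
  fix g assume "g \<in> set compute"
  then obtain j where j: "j < L" and g: "g \<in> set (stage j)" by (auto simp: compute_def)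
  show "classical_gate (n + m) g"
  proof (cases "diagonal_gate (U ! j)")
    case True
    with g show ?thesis
      using classical_fanout[OF Mc_classical _ block_bound[OF j]] by (simp add: stage_def)
  next
    case False
    with g j show ?thesis by (simp add: stage_def classical_gate_U)
  qed
qed

lemma classical_layer: "\<forall>g\<in>set layer. classical_gate (n + m) g \<and> diagonal_gate g"
  using classical_U classical_gate_shift[OF _ block_bound] by (auto simp: layer_def)

lemma classical_compiled: "\<forall>g\<in>set compiled. classical_gate (n + m) g"
  using classical_compute classical_layer
  by (auto simp: compiled_def rest_def classical_gate_U classical_gate_adj simp del: adj_gate.simps)

lemma phase_layer_gate:
  assumes x: "x \<in> bits n" and j: "j < L" "diagonal_gate (U ! j)"
  shows "gate_phase (shift_gate (n + j * n) (U ! j)) (state_at L x @ concat (ancilla_blocks L x)) = phase_at j x"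
proof -
  let ?c = "ancilla_blocks L x"
  have s: "length (state_at L x) = n" "length (state_at j x) = n"
    using state_at_bits[OF x] by (simp_all add: bits_def)
  have "drop (j * n) (concat ?c) = state_at j x @ concat (drop (Suc j) ?c)"
    using concat_split_block[OF length_ancilla_blocks[OF x], of j] j by (simp add: ancilla_blocks_def)
  moreover have "length (concat ?c) = L * n"
    using length_concat_blocks[OF length_ancilla_blocks[OF x]] by (simp add: ancilla_blocks_def)
  ultimately show ?thesis
    using j s qubits_U[OF nth_mem[OF j(1)]] by (simp add: gate_phase_shift gate_append phase_at_def)
qed

lemma run_layer:
  assumes x: "x \<in> bits n"
  defines "t \<equiv> state_at L x @ concat (ancilla_blocks L x)"
  shows "run_circ layer t = (t, \<Prod>j<L. if diagonal_gate (U ! j) then phase_at j x else 1)"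
proof -
  have "t \<in> bits (n + m)"
    using state_at_bits[OF x] length_concat_blocks[OF length_ancilla_blocks[OF x]]
    by (simp add: t_def bits_def ancilla_blocks_def m_def)
  then have "run_circ layer t = (t, \<Prod>g\<leftarrow>layer. gate_phase g t)"
    using classical_layer by (rule run_circ_diagonal[rotated])
  also have "(\<Prod>g\<leftarrow>layer. gate_phase g t) = (\<Prod>j\<leftarrow>filter (\<lambda>j. diagonal_gate (U ! j)) [0..<L]. phase_at j x)"
    unfolding layer_def t_def map_map comp_def
    by (rule arg_cong[where f = prod_list], rule map_cong) (auto simp: phase_layer_gate[OF x])
  also have "\<dots> = (\<Prod>j\<in>{j \<in> {..<L}. diagonal_gate (U ! j)}. phase_at j x)"
    by (simp add: prod.distinct_set_conv_list[symmetric] lessThan_def)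
  also have "\<dots> = (\<Prod>j<L. if diagonal_gate (U ! j) then phase_at j x else 1)"
    by (rule prod.inter_filter) simp
  finally show ?thesis .
qed

lemma run_rest:
  assumes x: "x \<in> bits n"
  shows "run_circ rest (x @ a) =
           (state_at L x @ a, \<Prod>j<L. if diagonal_gate (U ! j) then 1 else phase_at j x)"
proof -
  have prefix: "run_circ (filter (\<lambda>g. \<not> diagonal_gate g) (take K U)) x =
          (state_at K x, \<Prod>j<K. if diagonal_gate (U ! j) then 1 else phase_at j x)" if "K \<le> L" for K
    using that
  proof (induction K)
    case (Suc K)
    then have K: "K < L" by simp
    show ?case
    proof (cases "diagonal_gate (U ! K)")
      case True
      with Suc show ?thesis by (simp add: take_Suc_conv_app_nth state_at_Suc_diagonal[OF K True x])
    next
      case False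
      with Suc show ?thesis
        by (simp add: take_Suc_conv_app_nth run_circ_append state_at_Suc[OF K] phase_at_def mult.commute)
    qed
  qed (simp add: state_at_def)
  have "\<forall>g\<in>set rest. qubits g \<subseteq> {..<length x}"
    using x qubits_U by (auto simp: rest_def bits_def)
  with prefix[of L] show ?thesis by (simp add: run_circ_append_register rest_def)
qed

lemma run_compiled:
  assumes x: "x \<in> bits n"
  shows "run_circ compiled (x @ replicate m False) = (state_at L x @ replicate m False, \<Prod>j<L. phase_at j x)"
proof -
  define p where "p = (\<Prod>j<L. if diagonal_gate (U ! j) then 1 else phase_at j x)"
  define q where "q = (\<Prod>j<L. if diagonal_gate (U ! j) then phase_at j x else 1)"
  let ?x0 = "x @ replicate m False" and ?t = "state_at L x @ concat (ancilla_blocks L x)"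
  have x0: "?x0 \<in> bits (n + m)" using x by (simp add: bits_def)
  have compute: "run_circ compute ?x0 = (?t, p)" using run_compute[OF x] by (simp add: p_def)
  obtain r where uncompute: "run_circ (rev (map adj_gate compute)) ?t = (?x0, r)" and "r * p = 1"
    using run_circ_rev_adj[OF classical_compute x0] compute by (metis fst_conv snd_conv prod.collapse)
  have "run_circ compiled ?x0 = (state_at L x @ replicate m False, p * r * q * p)"
    using run_layer[OF x] run_rest[OF x]
    by (simp add: compiled_def run_circ_append compute uncompute p_def q_def)
  also have "p * r * q * p = q * p" using \<open>r * p = 1\<close> by (simp add: algebra_simps)
  also have "q * p = (\<Prod>j<L. phase_at j x)"
    unfolding p_def q_def prod.distrib[symmetric] by (rule prod.cong) simp_all
  finally show ?thesis .
qed

lemma circ_mat_compiled: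
  assumes x: "x \<in> bits n" and z: "z \<in> bits (n + m)"
  shows "circ_mat (n + m) compiled z (x @ replicate m False) =
           (if drop n z = replicate m False then circ_mat n U (take n z) x else 0)"
proof -
  have s: "length (state_at L x) = n" using state_at_bits[OF x] by (simp add: bits_def)
  have "circ_mat (n + m) compiled z (x @ replicate m False) =
          (if z = state_at L x @ replicate m False then \<Prod>j<L. phase_at j x else 0)"
    using circ_mat_run_circ[OF classical_compiled _ z] run_compiled[OF x] x by (simp add: bits_def)
  moreover have "circ_mat n U (take n z) x = (if take n z = state_at L x then \<Prod>j<L. phase_at j x else 0)"
    using circ_mat_run_circ[OF classical_U x] z run_circ_U by (simp add: bits_def state_at_def)
  moreover have "z = state_at L x @ replicate m False \<longleftrightarrow>
                   take n z = state_at L x \<and> drop n z = replicate m False"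
    using s append_eq_conv_conj[of "state_at L x" "replicate m False" z] by auto
  ultimately show ?thesis by auto
qed

definition allowed_kinds :: "(nat \<times> qmat) set" where
  "allowed_kinds = insert (2, Mc) (gate_kind ` set U)"

lemma allowed_kinds_compute: "\<forall>g\<in>set compute. gate_kind g \<in> allowed_kinds"
  by (auto simp: compute_def stage_def fanout_def allowed_kinds_def)

lemma allowed_kinds_compiled:
  "g \<in> set compiled \<Longrightarrow> gate_kind g \<in> allowed_kinds \<or> gate_kind (adj_gate g) \<in> allowed_kinds"
  using allowed_kinds_compute by (auto simp: compiled_def layer_def rest_def allowed_kinds_def simp del: adj_gate.simps)

lemma layer_block: "j < L \<Longrightarrow> q \<in> qubits (shift_gate (n + j * n) (U ! j)) \<Longrightarrow> (q - n) div n = j"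
  using qubits_U[OF nth_mem, of j] by (auto simp: qubits_shift)

lemma layer_disjoint:
  "\<forall>i<length layer. \<forall>j<length layer. i \<noteq> j \<longrightarrow> qubits (layer ! i) \<inter> qubits (layer ! j) = {}"
proof (intro allI impI)
  fix i j assume i: "i < length layer" and j: "j < length layer" and "i \<noteq> j"
  define f where "f = filter (\<lambda>j. diagonal_gate (U ! j)) [0..<L]"
  have "i < length f" "j < length f" using i j by (simp_all add: layer_def f_def)
  then have "f ! i \<noteq> f ! j" using \<open>i \<noteq> j\<close> nth_eq_iff_index_eq[of f] by (simp add: f_def)
  have block: "(q - n) div n = f ! k" if "k < length f" "q \<in> qubits (layer ! k)" for k q
  proof (rule layer_block)
    show "f ! k < L" using nth_mem[OF that(1)] by (simp add: f_def)
    show "q \<in> qubits (shift_gate (n + f ! k * n) (U ! (f ! k)))"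
      using that by (simp add: layer_def f_def)
  qed
  show "qubits (layer ! i) \<inter> qubits (layer ! j) = {}"
    using block[OF \<open>i < length f\<close>] block[OF \<open>j < length f\<close>] \<open>f ! i \<noteq> f ! j\<close> by force
qed

lemma not_diagonal_outside_layer:
  assumes "g \<in> set compute \<union> set (rev (map adj_gate compute) @ rest)"
  shows "\<not> diagonal_gate g"
proof -
  have "\<forall>g\<in>set compute. \<not> diagonal_gate g"
    using cnot_not_diagonal[OF Mc_cnot] by (auto simp: compute_def stage_def fanout_def diagonal_gate_def)
  with assms show ?thesis by (auto simp: rest_def simp del: adj_gate.simps)
qed

end

theorem lemma2:
  fixes G :: "(nat \<times> qmat) set" and d :: nat and D :: qmat
    and n :: nat and U :: "gate_app list"
  assumes G_ac: "\<forall>(k, M)\<in>G. almost_classical k M"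
    and G_cnot: "\<exists>M. (2, M) \<in> G \<and> mat_eq 2 M cnot"
    and G_D: "(d, D) \<in> G" and D_diag: "diagonal d D"
    and U_wf: "\<forall>g\<in>set U. wf_app n g"
    and U_gates: "\<forall>(k, M, qs)\<in>set U. (k, M) \<in> G"
  shows "\<exists>m C.
     (\<forall>g\<in>set C. wf_app (n + m) g) \<and>
     (\<forall>(k, M, qs)\<in>set C. almost_classical k M) \<and>
     (\<forall>(k, M, qs)\<in>set C. (\<exists>M'. (k, M') \<in> G \<and> (mat_eq k M M' \<or> mat_eq k M (adj M')))
                          \<or> is_D_power d D (k, M, qs)) \<and>
     D_single_layer d D C \<and>
     (\<forall>x\<in>bits n. \<forall>z\<in>bits (n + m).
        circ_mat (n + m) C z (x @ replicate m False) =
        (if drop n z = replicate m False then circ_mat n U (take n z) x else 0))"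
proof -
  obtain Mc where Mc: "(2, Mc) \<in> G" "mat_eq 2 Mc cnot" using G_cnot by blast
  have "\<forall>g\<in>set U. classical_gate n g"
    using G_ac U_wf U_gates by (fastforce simp: classical_gate_def)
  then interpret diagonal_layering n U Mc
    using Mc G_ac by unfold_locales auto
  have allowed_kinds_G: "allowed_kinds \<subseteq> G" using U_gates Mc(1) by (auto simp: allowed_kinds_def)
  have "\<forall>(k, M, qs)\<in>set compiled. \<exists>M'. (k, M') \<in> G \<and> (mat_eq k M M' \<or> mat_eq k M (adj M'))"
    using allowed_kinds_compiled allowed_kinds_G by (fastforce simp: mat_eq_def)
  moreover have "\<forall>g\<in>set compute \<union> set (rev (map adj_gate compute) @ rest). \<not> is_D_power d D g"
    using not_diagonal_outside_layer diagonal_if_D_power[OF D_diag] by blast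
  then have "D_single_layer d D compiled"
    unfolding D_single_layer_def compiled_def using layer_disjoint by blast
  ultimately show ?thesis
    using classical_compiled circ_mat_compiled
    by (intro exI[of _ m] exI[of _ compiled]) (auto simp: classical_gate_def)
qed

end
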